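(* Let $n$ be a positive integer and let $G\subset\mathrm{GL}_2(\mathbb{Z}/n)$ be a subgroup containing $\mathrm{SL}_2^+(\mathbb{Z}/n)$, acting on $(\mathbb{Z}/n)^2$ tautologically. If $n$ is odd, then $H^1(G,(\mathbb{Z}/n)^2)=0$. If $n=2^r m$ with $m$ odd and $r\geq1$, then the abelian group $H^1(G,(\mathbb{Z}/n)^2)$ is annihilated by $2^{r-1}$.
   Context: For an integer $n>1$, $\mathrm{SL}_2^+(\mathbb{Z}/n)$ is defined as $\mathrm{SL}_2(\mathbb{Z}/n)$ if $n$ is odd, and, if $n$ is even, as the kernel of the composite $\mathrm{SL}_2(\mathbb{Z}/n)\to\mathrm{SL}_2(\mathbb{Z}/2)\cong S_3\to\{\pm1\}$ of reduction modulo $2$ and the signature. *)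

theory Defs
  imports "HOL-Algebra.Group" "HOL-Combinatorics.Permutations"
begin

text \<open>Elements of Z/n are represented by their canonical representatives in {0..<n} (as integers).
  A 2x2 matrix (a b; c d) over Z/n is the tuple (a,b,c,d); a vector is a pair (x,y).\<close>

type_synonym mat2 = "int \<times> int \<times> int \<times> int"
type_synonym vec2 = "int \<times> int"

fun det2 :: "mat2 \<Rightarrow> int" where
  "det2 (a,b,c,d) = a*d - b*c"

fun mmul :: "nat \<Rightarrow> mat2 \<Rightarrow> mat2 \<Rightarrow> mat2" where
  "mmul n (a,b,c,d) (e,f,g,h) =
     ((a*e+b*g) mod int n, (a*f+b*h) mod int n, (c*e+d*g) mod int n, (c*f+d*h) mod int n)"

fun mentries :: "mat2 \<Rightarrow> int set" where
  "mentries (a,b,c,d) = {a,b,c,d}"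

definition GL2 :: "nat \<Rightarrow> mat2 monoid" where
  "GL2 n = \<lparr> carrier = {M. mentries M \<subseteq> {0..<int n} \<and> coprime (det2 M) (int n)},
             monoid.mult = mmul n,
             monoid.one = (1 mod int n, 0, 0, 1 mod int n) \<rparr>"

definition SL2 :: "nat \<Rightarrow> mat2 set" where
  "SL2 n = {M \<in> carrier (GL2 n). det2 M mod int n = 1 mod int n}"

text \<open>Action of the reduction mod 2 of a matrix on vectors, and the induced permutation of
  the three nonzero vectors of (Z/2)^2 (this is the isomorphism SL_2(Z/2) = S_3).\<close>
fun act2 :: "mat2 \<Rightarrow> vec2 \<Rightarrow> vec2" where
  "act2 (a,b,c,d) (x,y) = ((a*x+b*y) mod 2, (c*x+d*y) mod 2)"

definition nonzero2 :: "vec2 set" where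
  "nonzero2 = {(1,0),(0,1),(1,1)}"

definition perm2 :: "mat2 \<Rightarrow> vec2 \<Rightarrow> vec2" where
  "perm2 M = (\<lambda>v. if v \<in> nonzero2 then act2 M v else v)"

text \<open>SL_2^+(Z/n): SL_2 for n odd; for n even the kernel of the signature of the mod-2 reduction.\<close>
definition SL2plus :: "nat \<Rightarrow> mat2 set" where
  "SL2plus n = (if odd n then SL2 n else {M \<in> SL2 n. sign (perm2 M) = (1::int)})"

definition V :: "nat \<Rightarrow> vec2 set" where
  "V n = {0..<int n} \<times> {0..<int n}"

fun mvec :: "nat \<Rightarrow> mat2 \<Rightarrow> vec2 \<Rightarrow> vec2" where
  "mvec n (a,b,c,d) (x,y) = ((a*x+b*y) mod int n, (c*x+d*y) mod int n)"

fun vadd :: "nat \<Rightarrow> vec2 \<Rightarrow> vec2 \<Rightarrow> vec2" where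
  "vadd n (x,y) (u,w) = ((x+u) mod int n, (y+w) mod int n)"

fun vsub :: "nat \<Rightarrow> vec2 \<Rightarrow> vec2 \<Rightarrow> vec2" where
  "vsub n (x,y) (u,w) = ((x-u) mod int n, (y-w) mod int n)"

fun vscale :: "nat \<Rightarrow> int \<Rightarrow> vec2 \<Rightarrow> vec2" where
  "vscale n k (x,y) = ((k*x) mod int n, (k*y) mod int n)"

text \<open>1-cocycles (crossed homomorphisms) and 1-coboundaries of G with values in (Z/n)^2;
  H^1(G,(Z/n)^2) = Z1 / B1.\<close>
definition Z1 :: "nat \<Rightarrow> mat2 set \<Rightarrow> (mat2 \<Rightarrow> vec2) set" where
  "Z1 n G = {f. (\<forall>g\<in>G. f g \<in> V n) \<and>
                (\<forall>g\<in>G. \<forall>h\<in>G. f (mmul n g h) = vadd n (f g) (mvec n g (f h)))}"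

definition B1 :: "nat \<Rightarrow> mat2 set \<Rightarrow> (mat2 \<Rightarrow> vec2) set" where
  "B1 n G = {f. \<exists>v\<in>V n. \<forall>g\<in>G. f g = vsub n (mvec n g v) v}"

end

theory Submission
  imports Defs "HOL-Library.Product_Plus" "HOL-Number_Theory.Cong"
begin

text \<open>
  If a scalar matrix \<open>z = l\<close> lies in \<open>G\<close>, comparing \<open>f (g z)\<close> with \<open>f (z g)\<close> for a cocycle \<open>f\<close>
  gives \<open>(l - 1) f(g) = (g - 1) f(z)\<close>; hence \<open>K f\<close> is a coboundary whenever \<open>K\<close> is a multiple of
  \<open>l - 1\<close> modulo \<open>n\<close>. For odd \<open>n\<close> take \<open>l = -1\<close>. For \<open>n = 2^r m\<close> with \<open>r \<ge> 2\<close> take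
  \<open>l \<equiv> 1 + 2^(r-1) (mod 2^r)\<close> and \<open>l \<equiv> -1 (mod m)\<close>: then \<open>l\<^sup>2 \<equiv> 1\<close>, so \<open>l\<close> lies in \<open>SL\<^sub>2\<^sup>+\<close>,
  and \<open>2^(r-1)\<close> is a multiple of \<open>l - 1\<close>.

  For \<open>n = 2m\<close> no scalar is good enough. Instead take \<open>c \<in> SL\<^sub>2\<^sup>+\<close> congruent to \<open>-1\<close> modulo \<open>m\<close>
  and of order three modulo 2. Then \<open>c - 1\<close> is invertible, so after subtracting a coboundary the
  cocycle vanishes at \<open>c\<close>; and every \<open>g\<close> either commutes with \<open>c\<close> or satisfies \<open>c g c = g\<close>, either
  of which forces \<open>f(g)\<close> to be fixed by \<open>c\<close>, hence zero.
\<close>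

fun mat_vec :: "mat2 \<Rightarrow> vec2 \<Rightarrow> vec2" where
  "mat_vec (a,b,c,d) (x,y) = (a*x + b*y, c*x + d*y)"

fun mat_mult :: "mat2 \<Rightarrow> mat2 \<Rightarrow> mat2" where
  "mat_mult (a,b,c,d) (e,f,g,h) = (a*e + b*g, a*f + b*h, c*e + d*g, c*f + d*h)"

fun vec_smult :: "int \<Rightarrow> vec2 \<Rightarrow> vec2" where
  "vec_smult k (x,y) = (k*x, k*y)"

fun vec_mod :: "int \<Rightarrow> vec2 \<Rightarrow> vec2" where
  "vec_mod N (x,y) = (x mod N, y mod N)"

fun mat_mod :: "int \<Rightarrow> mat2 \<Rightarrow> mat2" where
  "mat_mod N (a,b,c,d) = (a mod N, b mod N, c mod N, d mod N)"

fun adj2 :: "mat2 \<Rightarrow> mat2" where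
  "adj2 (a,b,c,d) = (d, -b, -c, a)"

lemma mvec_eq_vec_mod: "mvec n M u = vec_mod (int n) (mat_vec M u)"
  by (cases M; cases u) simp
lemma vadd_eq_vec_mod: "vadd n u w = vec_mod (int n) (u + w)"
  by (cases u; cases w) simp
lemma vsub_eq_vec_mod: "vsub n u w = vec_mod (int n) (u - w)"
  by (cases u; cases w) simp
lemma vscale_eq_vec_mod: "vscale n k u = vec_mod (int n) (vec_smult k u)"
  by (cases u) simp
lemma mmul_eq_mat_mod: "mmul n M M' = mat_mod (int n) (mat_mult M M')"
  by (cases M; cases M') simp

lemmas reduced_ops_eq_mod =
  mvec_eq_vec_mod vadd_eq_vec_mod vsub_eq_vec_mod vscale_eq_vec_mod

lemma mat_vec_add: "mat_vec M (u + w) = mat_vec M u + mat_vec M w"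
  by (cases M; cases u; cases w) (simp add: algebra_simps)
lemma mat_vec_diff: "mat_vec M (u - w) = mat_vec M u - mat_vec M w"
  by (cases M; cases u; cases w) (simp add: algebra_simps)
lemma mat_vec_zero [simp]: "mat_vec M 0 = 0"
  by (cases M) (simp add: zero_prod_def)
lemma mat_vec_id [simp]: "mat_vec (1,0,0,1) u = u"
  by (cases u) simp
lemma mat_vec_mat_mult: "mat_vec (mat_mult M M') u = mat_vec M (mat_vec M' u)"
  by (cases M; cases M'; cases u) (simp add: algebra_simps)
lemma mat_vec_minus_mat: "mat_vec (M - M') u = mat_vec M u - mat_vec M' u"
  by (cases M; cases M'; cases u) (simp add: algebra_simps)
lemma mat_vec_smult: "mat_vec M (vec_smult k u) = vec_smult k (mat_vec M u)"
  by (cases M; cases u) (simp add: algebra_simps)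
lemma vec_smult_diff: "vec_smult k (u - w) = vec_smult k u - vec_smult k w"
  by (cases u; cases w) (simp add: algebra_simps)
lemma vec_smult_smult: "vec_smult k (vec_smult k' u) = vec_smult (k*k') u"
  by (cases u) simp
lemma vec_smult_one [simp]: "vec_smult 1 u = u"
  by (cases u) simp
lemma vec_smult_zero [simp]: "vec_smult k 0 = 0"
  by (simp add: zero_prod_def)
lemma mat_vec_adj2: "mat_vec (adj2 M) (mat_vec M u) = vec_smult (det2 M) u"
  by (cases M; cases u) (simp add: algebra_simps)
lemma mat_vec_adj2': "mat_vec M (mat_vec (adj2 M) u) = vec_smult (det2 M) u"
  by (cases M; cases u) (simp add: algebra_simps)

lemma vec_mod_zero [simp]: "vec_mod N 0 = 0"
  by (simp add: zero_prod_def)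
lemma vec_mod_add_left_eq [mod_simps]: "vec_mod N (vec_mod N u + w) = vec_mod N (u + w)"
  by (cases u; cases w) (auto intro!: mod_add_cong simp: mod_simps)
lemma vec_mod_add_right_eq [mod_simps]: "vec_mod N (u + vec_mod N w) = vec_mod N (u + w)"
  by (cases u; cases w) (auto intro!: mod_add_cong simp: mod_simps)
lemma vec_mod_diff_left_eq [mod_simps]: "vec_mod N (vec_mod N u - w) = vec_mod N (u - w)"
  by (cases u; cases w) (auto intro!: mod_add_cong simp: mod_simps)
lemma vec_mod_diff_right_eq [mod_simps]: "vec_mod N (u - vec_mod N w) = vec_mod N (u - w)"
  by (cases u; cases w) (auto intro!: mod_add_cong simp: mod_simps)
lemma vec_mod_mat_vec_eq [mod_simps]: "vec_mod N (mat_vec M (vec_mod N u)) = vec_mod N (mat_vec M u)"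
  by (cases M; cases u) (auto intro!: mod_add_cong simp: mod_simps)
lemma vec_mod_mat_mod_eq [mod_simps]: "vec_mod N (mat_vec (mat_mod N M) u) = vec_mod N (mat_vec M u)"
  by (cases M; cases u) (auto intro!: mod_add_cong simp: mod_simps)
lemma vec_mod_smult_eq [mod_simps]: "vec_mod N (vec_smult k (vec_mod N u)) = vec_mod N (vec_smult k u)"
  by (cases u) (auto intro!: mod_add_cong simp: mod_simps)
lemma vec_mod_add_mat_vec_eq [mod_simps]:
  "vec_mod N (u + mat_vec M (vec_mod N w)) = vec_mod N (u + mat_vec M w)"
  by (metis vec_mod_add_right_eq vec_mod_mat_vec_eq)
lemma mat_mod_mult_left_eq [mod_simps]: "mat_mod N (mat_mult (mat_mod N A) B) = mat_mod N (mat_mult A B)"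
  by (cases A; cases B) (auto intro!: mod_add_cong simp: mod_simps)
lemma mat_mod_mult_right_eq [mod_simps]: "mat_mod N (mat_mult A (mat_mod N B)) = mat_mod N (mat_mult A B)"
  by (cases A; cases B) (auto intro!: mod_add_cong simp: mod_simps)

lemma vec_mod_mat_vec_mmul [mod_simps]:
  "vec_mod (int n) (mat_vec (mmul n M M') u) = vec_mod (int n) (mat_vec M (mat_vec M' u))"
  by (simp add: mmul_eq_mat_mod mod_simps mat_vec_mat_mult)

lemma vec_mod_eq_iff_diff: "vec_mod N u = vec_mod N w \<longleftrightarrow> vec_mod N (u - w) = 0"
  by (cases u; cases w) (simp add: zero_prod_def mod_eq_dvd_iff dvd_eq_mod_eq_0[symmetric])

lemma vec_mod_smult_cong_scalar: "[a = b] (mod N) \<Longrightarrow> vec_mod N (vec_smult a u) = vec_mod N (vec_smult b u)"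
  by (cases u) (simp add: cong_def, metis mod_mult_left_eq)

lemma vec_mod_mat_vec_cong:
  "vec_mod N u = vec_mod N w \<Longrightarrow> vec_mod N (mat_vec M u) = vec_mod N (mat_vec M w)"
  by (metis vec_mod_mat_vec_eq)
lemma vec_mod_smult_cong:
  "vec_mod N u = vec_mod N w \<Longrightarrow> vec_mod N (vec_smult k u) = vec_mod N (vec_smult k w)"
  by (metis vec_mod_smult_eq)

lemma mat_mod_mult_cong:
  "mat_mod N A = mat_mod N A' \<Longrightarrow> mat_mod N B = mat_mod N B' \<Longrightarrow>
   mat_mod N (mat_mult A B) = mat_mod N (mat_mult A' B')"
  by (metis mat_mod_mult_left_eq mat_mod_mult_right_eq)

lemma mat_mod_mult_modulus:
  assumes "coprime a b" "mat_mod a X = mat_mod a Y" "mat_mod b X = mat_mod b Y"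
  shows "mat_mod (a * b) X = mat_mod (a * b) Y"
  using assms by (cases X; cases Y) (auto simp: mod_eq_dvd_iff divides_mult)

lemma vec_mod_V: "u \<in> V n \<Longrightarrow> vec_mod (int n) u = u"
  by (cases u) (auto simp: V_def)
lemma vec_mod_in_V: "n > 0 \<Longrightarrow> vec_mod (int n) u \<in> V n"
  by (cases u) (auto simp: V_def)
lemma mat_mod_carrier: "M \<in> carrier (GL2 n) \<Longrightarrow> mat_mod (int n) M = M"
  by (cases M) (auto simp: GL2_def)

lemma vec_mod_eq_0_if_mat_vec_eq_0:
  assumes "coprime (det2 M) N" and "vec_mod N (mat_vec M u) = 0"
  shows "vec_mod N u = 0"
proof -
  obtain k where "[k * det2 M = 1] (mod N)"
    using assms(1) by (auto simp: coprime_iff_invertible_int mult.commute)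
  then have "vec_mod N u = vec_mod N (vec_smult (k * det2 M) u)"
    by (metis vec_mod_smult_cong_scalar vec_smult_one)
  also have "\<dots> = vec_mod N (vec_smult k (mat_vec (adj2 M) (mat_vec M u)))"
    by (simp only: mat_vec_adj2 vec_smult_smult)
  also have "\<dots> = vec_mod N (vec_smult k (mat_vec (adj2 M) 0))"
    using assms(2) by (intro vec_mod_smult_cong vec_mod_mat_vec_cong) simp
  finally show ?thesis
    by simp
qed

lemma mat_vec_solvable_mod:
  assumes "coprime (det2 M) N"
  obtains v where "vec_mod N (mat_vec M v) = vec_mod N p"
proof -
  obtain k where k: "[k * det2 M = 1] (mod N)"
    using assms by (auto simp: coprime_iff_invertible_int mult.commute)
  have "mat_vec M (vec_smult k (mat_vec (adj2 M) p)) = vec_smult (k * det2 M) p"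
    by (simp only: mat_vec_smult mat_vec_adj2' vec_smult_smult)
  with k have "vec_mod N (mat_vec M (vec_smult k (mat_vec (adj2 M) p))) = vec_mod N p"
    by (metis vec_mod_smult_cong_scalar vec_smult_one)
  then show thesis
    by (rule that)
qed

lemma Z1_in_V: "f \<in> Z1 n G \<Longrightarrow> g \<in> G \<Longrightarrow> f g \<in> V n"
  by (simp add: Z1_def)

lemma Z1_mmul:
  "f \<in> Z1 n G \<Longrightarrow> g \<in> G \<Longrightarrow> h \<in> G \<Longrightarrow> f (mmul n g h) = vec_mod (int n) (f g + mat_vec g (f h))"
  by (simp add: Z1_def reduced_ops_eq_mod mod_simps)

lemma subgroup_mmul_closed: "subgroup G (GL2 n) \<Longrightarrow> g \<in> G \<Longrightarrow> h \<in> G \<Longrightarrow> mmul n g h \<in> G"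
  using subgroup.m_closed[of G "GL2 n" g h] by (simp add: GL2_def)

lemma B1_I:
  assumes "n > 0" and "\<And>g. g \<in> G \<Longrightarrow> \<phi> g = vec_mod (int n) (mat_vec g v - v)"
  shows "\<phi> \<in> B1 n G"
  unfolding B1_def
proof (intro CollectI bexI ballI)
  show "vec_mod (int n) v \<in> V n"
    using assms(1) by (rule vec_mod_in_V)
  show "\<phi> g = vsub n (mvec n g (vec_mod (int n) v)) (vec_mod (int n) v)" if "g \<in> G" for g
    using assms(2)[OF that] by (simp add: reduced_ops_eq_mod mod_simps)
qed

lemma Z1_diff_coboundary:
  assumes f: "f \<in> Z1 n G" and "subgroup G (GL2 n)" and "n > 0"
  shows "(\<lambda>g. vsub n (f g) (vsub n (mvec n g v) v)) \<in> Z1 n G"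
    (is "?\<psi> \<in> _")
proof -
  let ?N = "int n"
  have \<psi>: "?\<psi> g = vec_mod ?N (f g - (mat_vec g v - v))" for g
    by (simp add: reduced_ops_eq_mod mod_simps)
  have "?\<psi> (mmul n g h) = vadd n (?\<psi> g) (mvec n g (?\<psi> h))" if "g \<in> G" "h \<in> G" for g h
  proof -
    have "?\<psi> (mmul n g h) = vec_mod ?N (f g + mat_vec g (f h) - (mat_vec g (mat_vec h v) - v))"
      using that f by (simp add: Z1_mmul reduced_ops_eq_mod mod_simps)
    also have "\<dots> = vec_mod ?N ((f g - (mat_vec g v - v)) + mat_vec g (f h - (mat_vec h v - v)))"
      by (simp add: mat_vec_add mat_vec_diff algebra_simps)
    also have "\<dots> = vadd n (?\<psi> g) (mvec n g (?\<psi> h))"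
      by (simp only: \<psi> reduced_ops_eq_mod mod_simps)
    finally show ?thesis .
  qed
  with assms show ?thesis
    by (auto simp: Z1_def vsub_eq_vec_mod vec_mod_in_V)
qed

lemma Z1_commuting:
  assumes f: "f \<in> Z1 n G" and "g \<in> G" "c \<in> G" and "mmul n g c = mmul n c g"
  shows "vec_mod (int n) (mat_vec c (f g) - f g) = vec_mod (int n) (mat_vec g (f c) - f c)"
proof -
  have "vec_mod (int n) (f c + mat_vec c (f g)) = vec_mod (int n) (f g + mat_vec g (f c))"
    using Z1_mmul[OF f] assms(2-4) by metis
  moreover have "(mat_vec c (f g) - f g) - (mat_vec g (f c) - f c)
      = (f c + mat_vec c (f g)) - (f g + mat_vec g (f c))"
    by (simp add: algebra_simps)
  ultimately show ?thesis
    by (simp only: vec_mod_eq_iff_diff)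
qed

lemma Z1_reversing:
  assumes f: "f \<in> Z1 n G" and G: "subgroup G (GL2 n)" and g: "g \<in> G" and c: "c \<in> G"
    and "f c = 0" and "mmul n c (mmul n g c) = g"
  shows "vec_mod (int n) (mat_vec c (f g) - f g) = 0"
proof -
  have fgc: "f (mmul n g c) = f g"
    using Z1_mmul[OF f g c] \<open>f c = 0\<close> vec_mod_V[OF Z1_in_V[OF f g]] by simp
  have "f g = f (mmul n c (mmul n g c))"
    using assms(6) by simp
  also have "\<dots> = vec_mod (int n) (f c + mat_vec c (f (mmul n g c)))"
    by (rule Z1_mmul[OF f c subgroup_mmul_closed[OF G g c]])
  also have "\<dots> = vec_mod (int n) (mat_vec c (f g))"
    using fgc \<open>f c = 0\<close> by simp
  finally have "vec_mod (int n) (mat_vec c (f g)) = vec_mod (int n) (f g)"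
    using vec_mod_V[OF Z1_in_V[OF f g]] by metis
  then show ?thesis
    by (simp only: vec_mod_eq_iff_diff)
qed

lemma Z1_eq_0_if_fixed:
  assumes "f \<in> Z1 n G" "g \<in> G" and "coprime (det2 (c - (1,0,0,1))) (int n)"
    and "vec_mod (int n) (mat_vec c (f g) - f g) = 0"
  shows "f g = 0"
proof -
  have "vec_mod (int n) (mat_vec (c - (1,0,0,1)) (f g)) = 0"
    using assms(4) by (simp only: mat_vec_minus_mat mat_vec_id)
  then have "vec_mod (int n) (f g) = 0"
    by (rule vec_mod_eq_0_if_mat_vec_eq_0[OF assms(3)])
  then show ?thesis
    using vec_mod_V[OF Z1_in_V[OF assms(1,2)]] by simp
qed

lemma Z1_subset_B1_via_element:
  assumes "n > 0" and G: "subgroup G (GL2 n)" and c: "c \<in> G"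
    and det: "coprime (det2 (c - (1,0,0,1))) (int n)"
    and commute_or_reverse: "\<And>g. g \<in> G \<Longrightarrow> mmul n g c = mmul n c g \<or> mmul n c (mmul n g c) = g"
  shows "Z1 n G \<subseteq> B1 n G"
proof
  fix f assume f: "f \<in> Z1 n G"
  obtain v where v: "vec_mod (int n) (mat_vec (c - (1,0,0,1)) v) = vec_mod (int n) (f c)"
    using mat_vec_solvable_mod[OF det] by blast
  define \<psi> where "\<psi> g = vsub n (f g) (vsub n (mvec n g v) v)" for g
  have \<psi>_eq: "\<psi> g = vec_mod (int n) (f g - (mat_vec g v - v))" for g
    by (simp add: \<psi>_def reduced_ops_eq_mod mod_simps)
  have \<psi>: "\<psi> \<in> Z1 n G"
    unfolding \<psi>_def using Z1_diff_coboundary[OF f G \<open>n > 0\<close>] .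
  have "vec_mod (int n) (f c) = vec_mod (int n) (mat_vec c v - v)"
    using v by (simp add: mat_vec_minus_mat)
  then have "\<psi> c = 0"
    by (simp only: \<psi>_eq vec_mod_eq_iff_diff)
  have "\<psi> g = 0" if g: "g \<in> G" for g
  proof (rule Z1_eq_0_if_fixed[OF \<psi> g det])
    show "vec_mod (int n) (mat_vec c (\<psi> g) - \<psi> g) = 0"
      using commute_or_reverse[OF g]
    proof
      assume "mmul n g c = mmul n c g"
      then show ?thesis
        using Z1_commuting[OF \<psi> g c] \<open>\<psi> c = 0\<close> by simp
    next
      assume "mmul n c (mmul n g c) = g"
      then show ?thesis
        using Z1_reversing[OF \<psi> G g c \<open>\<psi> c = 0\<close>] by simp
    qed
  qed
  then have "f g = vec_mod (int n) (mat_vec g v - v)" if "g \<in> G" for g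
    using that vec_mod_V[OF Z1_in_V[OF f that]]
    by (metis \<psi>_eq vec_mod_eq_iff_diff)
  then show "f \<in> B1 n G"
    using \<open>n > 0\<close> by (rule B1_I[rotated])
qed

lemma Z1_scale_in_B1_if_scalar_mem:
  assumes "n > 0" and f: "f \<in> Z1 n G" and z: "(l,0,0,l) \<in> G"
    and K: "[K = \<kappa> * (l - 1)] (mod int n)"
  shows "(\<lambda>g. vscale n K (f g)) \<in> B1 n G"
  using \<open>n > 0\<close>
proof (rule B1_I)
  fix g assume g: "g \<in> G"
  let ?z = "(l,0,0,l) :: mat2"
  have "mmul n g ?z = mmul n ?z g"
    by (cases g) (simp add: mult.commute)
  then have comm: "vec_mod (int n) (mat_vec ?z (f g) - f g) = vec_mod (int n) (mat_vec g (f ?z) - f ?z)"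
    by (rule Z1_commuting[OF f g z])
  have "vscale n K (f g) = vec_mod (int n) (vec_smult (\<kappa> * (l - 1)) (f g))"
    unfolding vscale_eq_vec_mod using K by (rule vec_mod_smult_cong_scalar)
  also have "\<dots> = vec_mod (int n) (vec_smult \<kappa> (mat_vec ?z (f g) - f g))"
    by (cases "f g") (simp add: algebra_simps)
  also have "\<dots> = vec_mod (int n) (vec_smult \<kappa> (mat_vec g (f ?z) - f ?z))"
    using comm by (rule vec_mod_smult_cong)
  also have "\<dots> = vec_mod (int n) (mat_vec g (vec_smult \<kappa> (f ?z)) - vec_smult \<kappa> (f ?z))"
    by (simp add: vec_smult_diff mat_vec_smult)
  finally show "vscale n K (f g) = vec_mod (int n) (mat_vec g (vec_smult \<kappa> (f ?z)) - vec_smult \<kappa> (f ?z))" .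
qed

lemma perm2_mat_mod_2: "perm2 (mat_mod 2 M) = perm2 M"
  by (cases M) (auto simp: perm2_def nonzero2_def mod_simps)

lemma perm2_id: "perm2 (1,0,0,1) = id"
  by (auto simp: perm2_def nonzero2_def)

lemma perm2_order3:
  "perm2 (0,1,1,1) = transpose (1,0) (0,1) \<circ> transpose (0,1) (1,1)"
  by (auto simp: perm2_def nonzero2_def transpose_def)

lemma sign_perm2_order3: "sign (perm2 (0,1,1,1)) = (1::int)"
  by (simp add: perm2_order3 sign_compose permutation_swap_id sign_swap_id)

lemma scalar_in_SL2plus:
  assumes "0 \<le> l" "l < int n" and l: "[l * l = 1] (mod int n)"
  shows "(l,0,0,l) \<in> SL2plus n"
proof -
  have "coprime (l * l) (int n)"
    using l by (auto simp: coprime_iff_invertible_int intro: exI[of _ 1])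
  then have SL2: "(l,0,0,l) \<in> SL2 n"
    using assms by (simp add: SL2_def GL2_def cong_def)
  have "sign (perm2 (l,0,0,l)) = (1::int)" if "even n"
  proof -
    have "[l * l = 1] (mod 2)"
      using l \<open>even n\<close> by (auto intro: cong_dvd_modulus)
    then have "odd l"
      by (auto simp: cong_def)
    then have "mat_mod 2 (l,0,0,l) = (1,0,0,1)"
      by (simp add: odd_iff_mod_2_eq_one)
    then show ?thesis
      by (metis perm2_mat_mod_2 perm2_id sign_id)
  qed
  with SL2 show ?thesis
    by (simp add: SL2plus_def)
qed

lemma Z1_scale_in_B1_if_SL2plus_subset:
  assumes "n > 0" and "SL2plus n \<subseteq> G" and f: "f \<in> Z1 n G"
    and l: "[l * l = 1] (mod int n)" and K: "[K = \<kappa> * (l - 1)] (mod int n)"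
  shows "(\<lambda>g. vscale n K (f g)) \<in> B1 n G"
proof -
  let ?l = "l mod int n"
  have l_mod: "[?l = l] (mod int n)"
    by (simp add: cong_def)
  have "[?l * ?l = 1] (mod int n)"
    using cong_trans[OF cong_mult[OF l_mod l_mod] l] .
  then have "(?l,0,0,?l) \<in> SL2plus n"
    using \<open>n > 0\<close> by (intro scalar_in_SL2plus) simp_all
  moreover have "[K = \<kappa> * (?l - 1)] (mod int n)"
    using K cong_sym[OF l_mod] by (metis cong_diff cong_refl cong_scalar_left cong_trans)
  ultimately show ?thesis
    using assms(1,2) f by (intro Z1_scale_in_B1_if_scalar_mem) auto
qed

lemma vscale_one_in_B1_iff: "f \<in> Z1 n G \<Longrightarrow> (\<lambda>g. vscale n 1 (f g)) \<in> B1 n G \<longleftrightarrow> f \<in> B1 n G"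
  by (auto simp: B1_def vscale_eq_vec_mod vec_mod_V Z1_in_V)

lemma GL2_mod2_commute_or_reverse:
  assumes "odd (det2 g)" and c: "mat_mod 2 c = (0,1,1,1)"
  shows "mat_mod 2 (mat_mult g c) = mat_mod 2 (mat_mult c g)
    \<or> mat_mod 2 (mat_mult c (mat_mult g c)) = mat_mod 2 g"
proof -
  let ?t = "(0,1,1,1) :: mat2"
  txt \<open>\<open>GL\<^sub>2(\<int>/2) \<cong> S\<^sub>3\<close>, and \<open>(0 1; 1 1)\<close> is a 3-cycle: even permutations commute with it,
    transpositions invert it.\<close>
  obtain a b c' d where g: "g = (a,b,c',d)"
    by (cases g)
  have parity: "mat_mod 2 (mat_mult g ?t) = mat_mod 2 (mat_mult ?t g)
    \<or> mat_mod 2 (mat_mult ?t (mat_mult g ?t)) = mat_mod 2 g"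
    using assms(1) unfolding g
    by (cases "even a"; cases "even b"; cases "even c'"; cases "even d"; simp add: mod_eq_dvd_iff)
  have ct: "mat_mod 2 c = mat_mod 2 ?t"
    using c by simp
  have gc: "mat_mod 2 (mat_mult g c) = mat_mod 2 (mat_mult g ?t)"
    by (rule mat_mod_mult_cong[OF refl ct])
  moreover have "mat_mod 2 (mat_mult c g) = mat_mod 2 (mat_mult ?t g)"
    by (rule mat_mod_mult_cong[OF ct refl])
  moreover have "mat_mod 2 (mat_mult c (mat_mult g c)) = mat_mod 2 (mat_mult ?t (mat_mult g ?t))"
    by (rule mat_mod_mult_cong[OF ct gc])
  ultimately show ?thesis
    using parity by simp
qed

lemma mat_mod_minus_one_commute_reverse:
  assumes c: "mat_mod N c = mat_mod N (-1,0,0,-1)"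
  shows "mat_mod N (mat_mult g c) = mat_mod N (mat_mult c g)"
    and "mat_mod N (mat_mult c (mat_mult g c)) = mat_mod N g"
proof -
  let ?e = "(-1,0,0,-1) :: mat2"
  have gc: "mat_mod N (mat_mult g c) = mat_mod N (mat_mult g ?e)"
    by (rule mat_mod_mult_cong[OF refl c])
  moreover have "mat_mod N (mat_mult c g) = mat_mod N (mat_mult ?e g)"
    by (rule mat_mod_mult_cong[OF c refl])
  moreover have "mat_mult g ?e = mat_mult ?e g"
    by (cases g) simp
  ultimately show "mat_mod N (mat_mult g c) = mat_mod N (mat_mult c g)"
    by simp
  have "mat_mod N (mat_mult c (mat_mult g c)) = mat_mod N (mat_mult ?e (mat_mult g ?e))"
    by (rule mat_mod_mult_cong[OF c gc])
  also have "mat_mult ?e (mat_mult g ?e) = g"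
    by (cases g) simp
  finally show "mat_mod N (mat_mult c (mat_mult g c)) = mat_mod N g" .
qed

text \<open>Congruent to \<open>-1\<close> modulo \<open>m\<close>, and to the element \<open>(0 1; 1 1)\<close> of order three modulo 2.\<close>
definition rot3 :: "nat \<Rightarrow> mat2" where
  "rot3 m = (int m - 1, int m, int m, 2 * int m - 1)"

lemma rot3_mod_2: "odd m \<Longrightarrow> mat_mod 2 (rot3 m) = (0,1,1,1)"
  by (simp add: rot3_def mod2_eq_if)
lemma rot3_mod_self: "mat_mod (int m) (rot3 m) = mat_mod (int m) (-1,0,0,-1)"
  by (simp add: rot3_def mod_eq_dvd_iff)

lemma rot3_in_SL2plus:
  assumes "odd m"
  shows "rot3 m \<in> SL2plus (2 * m)"
proof -
  obtain k where k: "m = 2 * k + 1"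
    using assms by (rule oddE)
  have det: "[det2 (rot3 m) = 1] (mod int (2 * m))"
    unfolding cong_iff_dvd_diff dvd_def
    by (rule exI[of _ "int k - 1"]) (simp add: rot3_def k algebra_simps)
  then have "coprime (det2 (rot3 m)) (int (2 * m))"
    by (auto simp: coprime_iff_invertible_int intro: exI[of _ 1])
  with det have "rot3 m \<in> SL2 (2 * m)"
    using assms by (auto simp: rot3_def SL2_def GL2_def cong_def elim!: oddE)
  moreover have "sign (perm2 (rot3 m)) = (1::int)"
    using assms by (metis perm2_mat_mod_2 rot3_mod_2 sign_perm2_order3)
  ultimately show ?thesis
    by (simp add: SL2plus_def)
qed

lemma coprime_det_rot3_minus_one:
  assumes "odd m"
  shows "coprime (det2 (rot3 m - (1,0,0,1))) (int (2 * m))"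
proof -
  have "coprime (2::int) (int m)"
    using assms by (simp add: coprime_commute)
  then have four: "coprime (4::int) (int m)"
    using coprime_mult_left_iff[of 2 2 "int m"] by simp
  have "det2 (rot3 m - (1,0,0,1)) = int m * (int m - 6) + 4"
    by (simp add: rot3_def algebra_simps)
  moreover have "odd (int m * (int m - 6) + 4)"
    using assms by simp
  moreover have "coprime (int m * (int m - 6) + 4) (int m)"
    using four by (rule coprime_cong_transfer_left) (simp add: cong_iff_dvd_diff)
  ultimately show ?thesis
    by simp
qed

lemma rot3_commute_or_reverse:
  assumes "odd m" and g: "g \<in> carrier (GL2 (2 * m))"
  shows "mmul (2 * m) g (rot3 m) = mmul (2 * m) (rot3 m) g
    \<or> mmul (2 * m) (rot3 m) (mmul (2 * m) g (rot3 m)) = g"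
proof -
  let ?c = "rot3 m" and ?N = "int (2 * m)"
  have N: "?N = 2 * int m"
    by simp
  have coprime_2: "coprime (2::int) (int m)"
    using assms by (simp add: coprime_commute)
  have "coprime (det2 g) (2 * int m)"
    using g by (cases g) (simp add: GL2_def)
  then have "odd (det2 g)"
    by auto
  then have "mat_mod 2 (mat_mult g ?c) = mat_mod 2 (mat_mult ?c g)
    \<or> mat_mod 2 (mat_mult ?c (mat_mult g ?c)) = mat_mod 2 g"
    using GL2_mod2_commute_or_reverse rot3_mod_2[OF \<open>odd m\<close>] by blast
  then have "mat_mod ?N (mat_mult g ?c) = mat_mod ?N (mat_mult ?c g)
    \<or> mat_mod ?N (mat_mult ?c (mat_mult g ?c)) = mat_mod ?N g"
    unfolding N using mat_mod_mult_modulus[OF coprime_2]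
      mat_mod_minus_one_commute_reverse[OF rot3_mod_self] by blast
  moreover have "mmul (2 * m) ?c (mmul (2 * m) g ?c) = mat_mod ?N (mat_mult ?c (mat_mult g ?c))"
    by (simp add: mmul_eq_mat_mod mod_simps)
  ultimately show ?thesis
    using mat_mod_carrier[OF g] by (simp add: mmul_eq_mat_mod)
qed

lemma Z1_subset_B1_twice_odd:
  assumes "odd m" and G: "subgroup G (GL2 (2 * m))" and "SL2plus (2 * m) \<subseteq> G"
  shows "Z1 (2 * m) G \<subseteq> B1 (2 * m) G"
proof (rule Z1_subset_B1_via_element[OF _ G])
  show "0 < 2 * m"
    using \<open>odd m\<close> by (simp add: odd_pos)
  show "rot3 m \<in> G"
    using rot3_in_SL2plus[OF \<open>odd m\<close>] assms(3) by blast
  show "coprime (det2 (rot3 m - (1,0,0,1))) (int (2 * m))"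
    using \<open>odd m\<close> by (rule coprime_det_rot3_minus_one)
  show "mmul (2 * m) g (rot3 m) = mmul (2 * m) (rot3 m) g
      \<or> mmul (2 * m) (rot3 m) (mmul (2 * m) g (rot3 m)) = g" if "g \<in> G" for g
    using rot3_commute_or_reverse[OF \<open>odd m\<close>] subgroup.subset[OF G] that by blast
qed

lemma exists_scalar_two_power_times_odd:
  assumes "odd m" and "r \<ge> 2"
  obtains l \<kappa> :: int
  where "[l * l = 1] (mod int (2^r * m))" and "[2^(r-1) = \<kappa> * (l - 1)] (mod int (2^r * m))"
proof -
  obtain s where r: "r = s + 2"
    using \<open>r \<ge> 2\<close> by (metis add.commute le_Suc_ex add_2_eq_Suc)
  define P :: int where "P = 2^s"
  have pow: "(2::int)^r = 4 * P" "(2::int)^(r-1) = 2 * P"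
    by (simp_all add: r P_def power_add)
  have "coprime ((2::int)^r) (int m)"
    using \<open>odd m\<close> by (simp add: coprime_commute)
  then have coprime: "coprime (4 * P) (int m)"
    by (simp only: pow)
  obtain l where l2: "[l = 1 + 2 * P] (mod 4 * P)" and lm: "[l = -1] (mod int m)"
    using binary_chinese_remainder_int[OF coprime] by blast
  obtain \<kappa> where \<kappa>2: "[\<kappa> = 1] (mod 4 * P)" and \<kappa>m: "[\<kappa> = - P] (mod int m)"
    using binary_chinese_remainder_int[OF coprime] by blast
  have "[l * l = (1 + 2 * P) * (1 + 2 * P)] (mod 4 * P)"
    using l2 by (rule cong_mult[OF _ l2])
  also have "[(1 + 2 * P) * (1 + 2 * P) = 1] (mod 4 * P)"
    by (simp add: cong_iff_dvd_diff algebra_simps dvd_def) (rule exI[of _ "1 + P"], simp add: algebra_simps)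
  finally have "[l * l = 1] (mod 4 * P)" .
  moreover have "[l * l = 1] (mod int m)"
    using cong_mult[OF lm lm] by simp
  moreover have "[\<kappa> * (l - 1) = 2 * P] (mod 4 * P)"
    using cong_mult[OF \<kappa>2 cong_diff[OF l2 cong_refl[of 1]]] by simp
  moreover have "[\<kappa> * (l - 1) = 2 * P] (mod int m)"
    using cong_mult[OF \<kappa>m cong_diff[OF lm cong_refl[of 1]]] by (simp add: mult.commute)
  ultimately have "[l * l = 1] (mod 4 * P * int m)" "[2 * P = \<kappa> * (l - 1)] (mod 4 * P * int m)"
    by (auto intro: coprime_cong_mult[OF _ _ coprime] cong_sym)
  then show ?thesis
    by (intro that[of l \<kappa>]) (unfold of_nat_mult of_nat_power of_nat_numeral pow)
qed

lemma Z1_subset_B1_odd: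
  assumes "odd n" and "SL2plus n \<subseteq> G"
  shows "Z1 n G \<subseteq> B1 n G"
proof
  fix f assume f: "f \<in> Z1 n G"
  obtain k where n: "n = 2 * k + 1"
    using \<open>odd n\<close> by (rule oddE)
  have "[1 = int k * (-1 - 1)] (mod int n)"
    by (simp add: n cong_iff_dvd_diff mult.commute)
  then have "(\<lambda>g. vscale n 1 (f g)) \<in> B1 n G"
    by (rule Z1_scale_in_B1_if_SL2plus_subset[OF _ assms(2) f, rotated 2]) (simp_all add: n)
  with f show "f \<in> B1 n G"
    by (simp add: vscale_one_in_B1_iff)
qed

lemma Z1_scale_in_B1_two_power:
  assumes n: "n = 2^r * m" and "odd m" "r \<ge> 2" and "SL2plus n \<subseteq> G" and f: "f \<in> Z1 n G"
  shows "(\<lambda>g. vscale n (2^(r-1)) (f g)) \<in> B1 n G"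
proof -
  obtain l \<kappa> where "[l * l = 1] (mod int n)" "[2^(r-1) = \<kappa> * (l - 1)] (mod int n)"
    using exists_scalar_two_power_times_odd[OF \<open>odd m\<close> \<open>r \<ge> 2\<close>] n by metis
  moreover have "n > 0"
    using n \<open>odd m\<close> by (simp add: odd_pos)
  ultimately show ?thesis
    using assms(4) f by (intro Z1_scale_in_B1_if_SL2plus_subset)
qed

theorem proposition4p2:
  fixes n :: nat and G :: "mat2 set"
  assumes "n > 0"
    and "subgroup G (GL2 n)"
    and "SL2plus n \<subseteq> G"
  shows "(odd n \<longrightarrow> Z1 n G \<subseteq> B1 n G)
       \<and> (\<forall>r m. n = 2^r * m \<and> odd m \<and> r \<ge> 1 \<longrightarrow>
            (\<forall>f\<in>Z1 n G. (\<lambda>g. vscale n (2^(r-1)) (f g)) \<in> B1 n G))"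
proof (intro conjI impI allI ballI)
  show "odd n \<Longrightarrow> Z1 n G \<subseteq> B1 n G"
    by (rule Z1_subset_B1_odd[OF _ assms(3)])
next
  fix r m f assume rm: "n = 2^r * m \<and> odd m \<and> 1 \<le> r" and f: "f \<in> Z1 n G"
  show "(\<lambda>g. vscale n (2^(r-1)) (f g)) \<in> B1 n G"
  proof (cases "r = 1")
    case True
    with rm assms(2,3) have "Z1 n G \<subseteq> B1 n G"
      using Z1_subset_B1_twice_odd[of m G] by simp
    with f True show ?thesis
      by (auto simp: vscale_one_in_B1_iff)
  next
    case False
    with rm assms(3) f show ?thesis
      using Z1_scale_in_B1_two_power[of n r m G f] by simp
  qed
qed

end
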